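(* Let $\mathscr{C}_n$ be the set of Catalan words of length $2n$. For every integer $m\ge 2$ and every $0\le r\le m-1$, $$\lim_{n\to\infty}\frac{\left|\{w\in\mathscr{C}_n:\ \mathrm{maj}(w)\equiv r\pmod m\}\right|}{|\mathscr{C}_n|}=\frac1m ,$$ where $|\mathscr{C}_n|=\frac{1}{n+1}\binom{2n}{n}$. That is, the major index over Catalan words of length $2n$ has the balanced property.
   Context: A Catalan word of length $2n$ is a sequence $w=w_1w_2\cdots w_{2n}$ consisting of $n$ zeros and $n$ ones such that no prefix contains more $1$'s than $0$'s. Its major index is $\mathrm{maj}(w)=\sum_{i:\,w_i>w_{i+1}} i$. A statistic $\xi$ on sets $Q_n$ has the balanced property if for every $m\ge 2$ and every $0\le r\le m-1$, $\lim_{n\to\infty}|\{\pi\in Q_n:\xi(\pi)\equiv r \pmod m\}|/|Q_n| = 1/m$. *)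

theory Defs
  imports Complex_Main
begin

text \<open>A word is a list of naturals over the alphabet {0,1}; positions are 1-based in the paper,
  so letter w_i is the list entry w ! (i - 1).\<close>

definition catalan_words :: "nat \<Rightarrow> nat list set" where
  "catalan_words n = {w. length w = 2 * n \<and> set w \<subseteq> {0, 1}
      \<and> count_list w 0 = n \<and> count_list w 1 = n
      \<and> (\<forall>k \<le> length w. count_list (take k w) 1 \<le> count_list (take k w) 0)}"

definition maj :: "nat list \<Rightarrow> nat" where
  "maj w = (\<Sum>i \<in> {i. 1 \<le> i \<and> i < length w \<and> w ! (i - 1) > w ! i}. i)"

end

theory Submission
  imports Defs "HOL-Combinatorics.Multiset_Permutations"
begin

(* Cut a word of length 2n into consecutive blocks of length K = m + 4 (plus a short tail)
   and call the m blocks  W t = 0 0 1^t 0 1^(m+1-t),  1 <= t <= m,  special.  Each special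
   block has exactly one descent, at position t + 2, and all special blocks have the same
   letter content, the same first and last letter and the same minimal prefix height.
   Hence replacing the FIRST special block W t of a word by W (t+1) (cyclically, W m by W 1)
   is an invertible map on Catalan words that contain a special block, and it increases the
   major index by exactly 1 modulo m.  So among these words maj is equidistributed mod m.
   The remaining Catalan words consist of blocks avoiding one fixed pattern, so there are at
   most 2^K (2^K - 1)^(2n div K) of them, whereas the cycle lemma gives at least
   binom(2n,n)/(2n+1) >= 4^n / (2n (2n+1)) Catalan words.  The exceptional fraction therefore
   tends to 0, which yields the limit 1/m. *)

subsection \<open>Descents and the major index of a concatenation\<close>

definition descents :: "nat list \<Rightarrow> nat set" where
  "descents w = {i. 1 \<le> i \<and> i < length w \<and> w ! (i - 1) > w ! i}"

definition des :: "nat list \<Rightarrow> nat" where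
  "des w = card (descents w)"

lemma maj_descents: "maj w = \<Sum>(descents w)"
  by (simp add: maj_def descents_def)

lemma finite_descents[simp]: "finite (descents w)"
  by (rule finite_subset[of _ "{..<length w}"]) (auto simp: descents_def)

lemma descents_Cons:
  "descents (a # v) = (if v \<noteq> [] \<and> a > hd v then {1} else {}) \<union> Suc ` descents v"
proof (rule set_eqI)
  fix i
  show "i \<in> descents (a # v) \<longleftrightarrow> i \<in> (if v \<noteq> [] \<and> a > hd v then {1} else {}) \<union> Suc ` descents v"
  proof (cases i)
    case 0 then show ?thesis by (auto simp: descents_def)
  next
    case (Suc j)
    then show ?thesis
      by (cases j; cases v) (auto simp: descents_def image_iff)
  qed
qed

lemma one_notin_Suc_descents: "1 \<notin> Suc ` descents v"
  by (auto simp: descents_def)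

lemma des_Cons: "des (a # v) = (if v \<noteq> [] \<and> a > hd v then 1 else 0) + des v"
  unfolding des_def descents_Cons using one_notin_Suc_descents[of v]
  by (auto simp: card_image card_insert_if)

lemma maj_Cons: "maj (a # v) = (if v \<noteq> [] \<and> a > hd v then 1 else 0) + maj v + des v"
proof -
  have "sum Suc D = \<Sum>D + card D" if "finite D" for D :: "nat set"
    using that by (induction D rule: finite_induct) auto
  then have "\<Sum>(Suc ` descents v) = \<Sum>(descents v) + des v"
    by (simp add: sum.reindex des_def)
  then show ?thesis
    unfolding maj_descents descents_Cons using one_notin_Suc_descents[of v]
    by (auto simp: sum.insert_if des_def)
qed

lemma maj_Nil[simp]: "maj [] = 0" and des_Nil[simp]: "des [] = 0"
  by (simp_all add: maj_descents des_def descents_def)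

lemma des_append: "x \<noteq> [] \<Longrightarrow>
  des (x @ y) = des x + (if y \<noteq> [] \<and> last x > hd y then 1 else 0) + des y"
  by (induction x rule: induct_list012) (auto simp: des_Cons)

lemma maj_append: "x \<noteq> [] \<Longrightarrow>
  maj (x @ y) = maj x + (if y \<noteq> [] \<and> last x > hd y then length x else 0) + maj y
      + length x * des y"
  by (induction x rule: induct_list012) (auto simp: maj_Cons des_Cons des_append algebra_simps)

lemma descents_replicate_Cons: "a \<le> b \<Longrightarrow> descents (a # replicate j b) = {}"
  by (auto simp: descents_def nth_Cons split: nat.splits)

lemma maj_replicate[simp]: "maj (replicate j a) = 0" and des_replicate[simp]: "des (replicate j a) = 0"
  by (simp_all add: maj_descents des_def descents_def)

subsection \<open>Prefix heights\<close>

text \<open>The lattice path of \<open>w\<close> (0 = up, 1 = down) started at height \<open>h\<close> never goes below 0.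
  Catalan words are exactly the balanced words with \<open>nonneg_path 0\<close>; the offset \<open>h\<close> makes the
  property compositional under concatenation.\<close>
definition nonneg_path :: "int \<Rightarrow> nat list \<Rightarrow> bool" where
  "nonneg_path h w \<longleftrightarrow>
     (\<forall>k \<le> length w. int (count_list (take k w) 1) \<le> int (count_list (take k w) 0) + h)"

lemma catalan_words_nonneg_path:
  "catalan_words n = {w. length w = 2 * n \<and> set w \<subseteq> {0, 1} \<and> count_list w 0 = n
      \<and> count_list w 1 = n \<and> nonneg_path 0 w}"
  by (simp add: catalan_words_def nonneg_path_def)

lemma nonneg_path_append: "nonneg_path h (x @ y) \<longleftrightarrow>
   nonneg_path h x \<and> nonneg_path (h + int (count_list x 0) - int (count_list x 1)) y"
proof
  assume g: "nonneg_path h (x @ y)"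
  have "nonneg_path h x"
    unfolding nonneg_path_def
  proof (intro allI impI)
    fix k assume "k \<le> length x"
    then show "int (count_list (take k x) 1) \<le> int (count_list (take k x) 0) + h"
      using g[unfolded nonneg_path_def, rule_format, of k] by simp
  qed
  moreover have "nonneg_path (h + int (count_list x 0) - int (count_list x 1)) y"
    unfolding nonneg_path_def
  proof (intro allI impI)
    fix k assume "k \<le> length y"
    then show "int (count_list (take k y) 1)
        \<le> int (count_list (take k y) 0) + (h + int (count_list x 0) - int (count_list x 1))"
      using g[unfolded nonneg_path_def, rule_format, of "length x + k"] by simp
  qed
  ultimately show "nonneg_path h x \<and> nonneg_path (h + int (count_list x 0) - int (count_list x 1)) y" ..
next
  assume a: "nonneg_path h x \<and> nonneg_path (h + int (count_list x 0) - int (count_list x 1)) y"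
  show "nonneg_path h (x @ y)"
    unfolding nonneg_path_def
  proof (intro allI impI)
    fix k assume k: "k \<le> length (x @ y)"
    show "int (count_list (take k (x @ y)) 1) \<le> int (count_list (take k (x @ y)) 0) + h"
    proof (cases "k \<le> length x")
      case True then show ?thesis using a[unfolded nonneg_path_def] by simp
    next
      case False
      then show ?thesis using a[unfolded nonneg_path_def] k
        by (auto simp: take_append dest!: spec[of _ "k - length x"])
    qed
  qed
qed

lemma count_list_replicate[simp]: "count_list (replicate n x) y = (if x = y then n else 0)"
  by (induction n) auto

lemma nonneg_path_replicate_0: "nonneg_path h (replicate j 0) \<longleftrightarrow> 0 \<le> h"
  by (auto simp: nonneg_path_def take_replicate)

lemma nonneg_path_replicate_1: "nonneg_path h (replicate j 1) \<longleftrightarrow> int j \<le> h"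
proof -
  have "(\<forall>k\<le>j. int (min k j) \<le> h) \<longleftrightarrow> int j \<le> h"
    by (metis min.absorb_iff1 min.idem order.trans nle_le of_nat_le_iff)
  then show ?thesis unfolding nonneg_path_def by (simp add: take_replicate)
qed

lemma nonneg_path_Cons_0: "nonneg_path h (0 # v) \<longleftrightarrow> 0 \<le> h \<and> nonneg_path (h + 1) v"
  using nonneg_path_append[of h "[0]" v] nonneg_path_replicate_0[of h 1] by simp

lemma catalan_words_nonempty: "catalan_words n \<noteq> {}"
proof -
  have "nonneg_path 0 (replicate n 0 @ replicate n 1)"
    by (simp add: nonneg_path_append nonneg_path_replicate_0 nonneg_path_replicate_1[simplified])
  then have "replicate n 0 @ replicate n 1 \<in> catalan_words n"
    unfolding catalan_words_nonneg_path by auto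
  then show ?thesis by blast
qed

lemma finite_catalan_words: "finite (catalan_words n)"
  by (rule finite_subset[of _ "{xs. set xs \<subseteq> {0,1} \<and> length xs = 2*n}"])
     (auto simp: catalan_words_def intro: finite_lists_length_eq)

subsection \<open>Special blocks\<close>

definition special_block :: "nat \<Rightarrow> nat \<Rightarrow> nat list" where
  "special_block m t = [0,0] @ replicate t 1 @ 0 # replicate (m+1-t) 1"

definition special_blocks :: "nat \<Rightarrow> nat list set" where
  "special_blocks m = special_block m ` {1..m}"

definition block_label :: "nat \<Rightarrow> nat list \<Rightarrow> nat" where
  "block_label m B = (THE t. t \<in> {1..m} \<and> special_block m t = B)"

lemma length_special_block[simp]: "t \<le> m+1 \<Longrightarrow> length (special_block m t) = m+4"
  by (simp add: special_block_def)

lemma special_block_nonempty[simp]: "special_block m t \<noteq> []"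
  by (simp add: special_block_def)

lemma hd_special_block[simp]: "hd (special_block m t) = 0"
  by (simp add: special_block_def)

lemma last_special_block[simp]: "t \<le> m \<Longrightarrow> last (special_block m t) = 1"
  by (simp add: special_block_def last_replicate)

lemma set_special_block: "set (special_block m t) \<subseteq> {0,1}"
  by (auto simp: special_block_def)

text \<open>The label is recovered as the position of the third zero.\<close>
lemma special_block_inj: assumes "special_block m s = special_block m t" shows "s = t"
proof -
  have zero: "special_block m t ! (t+2) = 0" for t
    by (simp add: special_block_def nth_append)
  have one: "2 \<le> i \<Longrightarrow> i < t+2 \<Longrightarrow> special_block m t ! i = 1" for i t
    by (simp add: special_block_def nth_append)
  show ?thesis
    using assms zero[of s] zero[of t] one[of "s+2" t] one[of "t+2" s]
    by (metis add_less_cancel_right le_add2 linorder_neqE_nat zero_neq_one)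
qed

lemma block_label_special_block[simp]: "t \<in> {1..m} \<Longrightarrow> block_label m (special_block m t) = t"
  unfolding block_label_def by (rule the_equality) (auto dest: special_block_inj)

lemma count_special_block:
  "s \<le> m+1 \<Longrightarrow> t \<le> m+1 \<Longrightarrow> count_list (special_block m s) a = count_list (special_block m t) a"
  by (simp add: special_block_def)

lemma maj_special_block: assumes "t \<in> {1..m}"
  shows "maj (special_block m t) = t + 2" and "des (special_block m t) = 1"
proof -
  define Z where "Z = 0 # replicate (m+1-t) (1::nat)"
  have Z: "maj Z = 0" "des Z = 0" "Z \<noteq> []" "hd Z = 0"
    by (simp_all add: Z_def maj_descents des_def descents_replicate_Cons)
  have t1: "t \<ge> 1" using assms by auto
  then have "maj (replicate t 1 @ Z) = t" "des (replicate t 1 @ Z) = 1"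
      "hd (replicate t 1 @ Z) = 1"
    using Z by (simp_all add: maj_append des_append last_replicate hd_append)
  then show "maj (special_block m t) = t + 2" "des (special_block m t) = 1"
    unfolding special_block_def Z_def[symmetric]
    by (simp_all add: maj_append des_append maj_Cons des_Cons)
qed

lemma nonneg_path_special_block: assumes "t \<in> {1..m}" "m \<ge> 2"
  shows "nonneg_path h (special_block m t) \<longleftrightarrow> int m - 2 \<le> h"
proof -
  have "special_block m t = replicate 2 0 @ (replicate t 1 @ (replicate 1 0 @ replicate (m+1-t) 1))"
    by (simp add: special_block_def numeral_2_eq_2)
  then have "nonneg_path h (special_block m t) \<longleftrightarrow> 0 \<le> h \<and> int t \<le> h + 2 \<and> 0 \<le> h + 2 - int t
      \<and> int (m+1-t) \<le> h + 3 - int t"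
    by (simp add: nonneg_path_append nonneg_path_replicate_0 nonneg_path_replicate_1[simplified]
        nonneg_path_Cons_0 algebra_simps)
  then show ?thesis using assms by (auto simp: of_nat_diff)
qed

subsection \<open>Relabelling the first special block\<close>

function relabel_first :: "nat \<Rightarrow> (nat \<Rightarrow> nat) \<Rightarrow> nat list \<Rightarrow> nat list" where
  "relabel_first m \<sigma> w =
     (if length w < m+4 then w
      else if take (m+4) w \<in> special_blocks m
        then special_block m (\<sigma> (block_label m (take (m+4) w))) @ drop (m+4) w
      else take (m+4) w @ relabel_first m \<sigma> (drop (m+4) w))"
  by pat_completeness auto
termination by (relation "measure (\<lambda>(m,\<sigma>,w). length w)") auto

function has_special :: "nat \<Rightarrow> nat list \<Rightarrow> bool" where
  "has_special m w =
     (if length w < m+4 then False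
      else take (m+4) w \<in> special_blocks m \<or> has_special m (drop (m+4) w))"
  by pat_completeness auto
termination by (relation "measure (\<lambda>(m,w). length w)") auto

declare relabel_first.simps[simp del] has_special.simps[simp del]

lemma block_induct[case_names short special nonspecial]:
  assumes "\<And>w. length w < m+4 \<Longrightarrow> P w"
    "\<And>w. \<not> length w < m+4 \<Longrightarrow> take (m+4) w \<in> special_blocks m \<Longrightarrow> P w"
    "\<And>w. \<not> length w < m+4 \<Longrightarrow> take (m+4) w \<notin> special_blocks m \<Longrightarrow> P (drop (m+4) w) \<Longrightarrow> P w"
  shows "P w"
proof (induction w rule: length_induct)
  case (1 w)
  then show ?case using assms by (cases "length w < m+4"; cases "take (m+4) w \<in> special_blocks m") auto
qed

lemma relabel_first_short: "length w < m+4 \<Longrightarrow> relabel_first m \<sigma> w = w"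
  by (subst relabel_first.simps) simp

lemma relabel_first_nonspecial: "\<not> length w < m+4 \<Longrightarrow> take (m+4) w \<notin> special_blocks m \<Longrightarrow>
   relabel_first m \<sigma> w = take (m+4) w @ relabel_first m \<sigma> (drop (m+4) w)"
  by (subst relabel_first.simps) simp

lemma has_special_short: "length w < m+4 \<Longrightarrow> \<not> has_special m w"
  by (subst has_special.simps) simp

lemma has_special_special: "\<not> length w < m+4 \<Longrightarrow> take (m+4) w \<in> special_blocks m \<Longrightarrow> has_special m w"
  by (subst has_special.simps) simp

lemma has_special_nonspecial: "\<not> length w < m+4 \<Longrightarrow> take (m+4) w \<notin> special_blocks m \<Longrightarrow>
   has_special m w = has_special m (drop (m+4) w)"
  by (subst has_special.simps) simp

lemma special_block_prefix[simp]: "t \<le> m+1 \<Longrightarrow> take (m+4) (special_block m t @ r) = special_block m t"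
  "t \<le> m+1 \<Longrightarrow> drop (m+4) (special_block m t @ r) = r"
  using length_special_block[of t m] by (metis append_eq_conv_conj)+

locale label_map =
  fixes m :: nat and \<sigma> :: "nat \<Rightarrow> nat"
  assumes maps_labels: "\<And>t. t \<in> {1..m} \<Longrightarrow> \<sigma> t \<in> {1..m}"
begin

lemma special_cases:
  assumes "take (m+4) w \<in> special_blocks m"
  obtains t where "t \<in> {1..m}" "\<sigma> t \<in> {1..m}" "take (m+4) w = special_block m t"
    "relabel_first m \<sigma> w = special_block m (\<sigma> t) @ drop (m+4) w"
proof -
  from assms obtain t where t: "t \<in> {1..m}" "take (m+4) w = special_block m t"
    unfolding special_blocks_def by auto
  then have "length (take (m+4) w) = m+4" by simp
  then have "\<not> length w < m+4" by simp
  then have "relabel_first m \<sigma> w = special_block m (\<sigma> t) @ drop (m+4) w"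
    using assms t by (subst relabel_first.simps) simp
  then show ?thesis using that t maps_labels by blast
qed

lemma length_relabel_first[simp]: "length (relabel_first m \<sigma> w) = length w"
proof (induction w rule: block_induct[where m=m])
  case (special w)
  from special(2) show ?case by (cases rule: special_cases) (use special(1) in simp)
qed (simp_all add: relabel_first_short relabel_first_nonspecial)

lemma count_relabel_first: "count_list (relabel_first m \<sigma> w) a = count_list w a"
proof (induction w rule: block_induct[where m=m])
  case (special w)
  from special(2) show ?case
  proof (cases rule: special_cases)
    case (1 t)
    have "count_list (special_block m (\<sigma> t)) a = count_list (take (m+4) w) a"
      using 1 count_special_block[of "\<sigma> t" m t] by simp
    then show ?thesis using 1(4) count_list_append[of "take (m+4) w" "drop (m+4) w" a] by simp
  qed
next
  case (nonspecial w)
  then show ?case using relabel_first_nonspecial[OF nonspecial(1,2)]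
      count_list_append[of "take (m+4) w" "drop (m+4) w" a] by simp
qed (simp add: relabel_first_short)

lemma set_relabel_first: "set w \<subseteq> {0,1} \<Longrightarrow> set (relabel_first m \<sigma> w) \<subseteq> {0,1}"
proof (induction w rule: block_induct[where m=m])
  case (special w)
  from special(2) show ?case
  proof (cases rule: special_cases)
    case (1 t)
    then show ?thesis
      using set_special_block[of m "\<sigma> t"] set_drop_subset[of "m+4" w] special(3) by auto
  qed
qed (auto simp: relabel_first_short relabel_first_nonspecial dest: in_set_dropD in_set_takeD)

lemma hd_relabel_first: "w \<noteq> [] \<Longrightarrow> hd (relabel_first m \<sigma> w) = hd w"
proof (induction w rule: block_induct[where m=m])
  case (special w)
  from special(2) show ?case
  proof (cases rule: special_cases)
    case (1 t)
    have "hd w = hd (take (m+4) w @ drop (m+4) w)" by simp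
    also have "\<dots> = 0" using 1(3) by simp
    finally show ?thesis using 1(4) by simp
  qed
next
  case (nonspecial w)
  have "take (m+4) w \<noteq> []" using nonspecial(1) by (cases w) auto
  then show ?case using relabel_first_nonspecial[OF nonspecial(1,2)]
    by (metis hd_append2 append_take_drop_id)
qed (simp add: relabel_first_short)

lemma des_special_block_append: "t \<in> {1..m} \<Longrightarrow>
  des (special_block m t @ r) = 1 + (if r \<noteq> [] \<and> 1 > hd r then 1 else 0) + des r"
  by (simp add: des_append maj_special_block)

lemma maj_special_block_append: "t \<in> {1..m} \<Longrightarrow>
  maj (special_block m t @ r) = t + 2 + (if r \<noteq> [] \<and> 1 > hd r then m+4 else 0) + maj r + (m+4) * des r"
  by (simp add: maj_append maj_special_block)

text \<open>Special blocks start with 0 and end with 1 and have one descent each, so the descent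
  number is unchanged.\<close>
lemma des_relabel_first: "des (relabel_first m \<sigma> w) = des w"
proof (induction w rule: block_induct[where m=m])
  case (special w)
  from special(2) show ?case
  proof (cases rule: special_cases)
    case (1 t)
    then show ?thesis using des_special_block_append[OF 1(1)] des_special_block_append[OF 1(2)]
      by (metis append_take_drop_id)
  qed
next
  case (nonspecial w)
  have ne: "take (m+4) w \<noteq> []" using nonspecial(1) by (cases w) auto
  have "relabel_first m \<sigma> (drop (m+4) w) = [] \<longleftrightarrow> drop (m+4) w = []"
    by (metis length_relabel_first length_0_conv)
  then have "des (take (m+4) w @ relabel_first m \<sigma> (drop (m+4) w)) = des (take (m+4) w @ drop (m+4) w)"
    unfolding des_append[OF ne] using nonspecial(3) hd_relabel_first by auto
  then show ?case using relabel_first_nonspecial[OF nonspecial(1,2)] by simp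
qed (simp add: relabel_first_short)

text \<open>Since all special blocks need the same starting height, the path condition is unchanged.\<close>
lemma nonneg_path_relabel_first: assumes "m \<ge> 2"
  shows "nonneg_path h (relabel_first m \<sigma> w) \<longleftrightarrow> nonneg_path h w"
proof (induction w arbitrary: h rule: block_induct[where m=m])
  case (special w)
  from special(2) show ?case
  proof (cases rule: special_cases)
    case (1 t)
    have "count_list (special_block m (\<sigma> t)) a = count_list (special_block m t) a" for a
      using 1 by (intro count_special_block) auto
    then have "nonneg_path h (special_block m (\<sigma> t) @ r) \<longleftrightarrow> nonneg_path h (special_block m t @ r)" for r
      using nonneg_path_special_block[OF 1(1) assms] nonneg_path_special_block[OF 1(2) assms]
      unfolding nonneg_path_append by simp
    then show ?thesis using 1(3,4) by (metis append_take_drop_id)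
  qed
next
  case (nonspecial w)
  then show ?case using relabel_first_nonspecial[OF nonspecial(1,2)]
    by (metis nonneg_path_append append_take_drop_id)
qed (simp add: relabel_first_short)

lemma relabel_first_catalan: "m \<ge> 2 \<Longrightarrow> w \<in> catalan_words n \<Longrightarrow> relabel_first m \<sigma> w \<in> catalan_words n"
  using set_relabel_first count_relabel_first nonneg_path_relabel_first
  unfolding catalan_words_nonneg_path by auto

lemma has_special_relabel_first: "has_special m (relabel_first m \<sigma> w) = has_special m w"
proof (induction w rule: block_induct[where m=m])
  case (special w)
  from special(2) show ?case
  proof (cases rule: special_cases)
    case (1 t)
    then have "has_special m (special_block m (\<sigma> t) @ drop (m+4) w)"
      by (intro has_special_special) (auto simp: special_blocks_def)
    then show ?thesis using has_special_special[OF special] 1(4) by simp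
  qed
next
  case (nonspecial w)
  have l: "\<not> length (relabel_first m \<sigma> w) < m+4" using nonspecial(1) by simp
  show ?case using has_special_nonspecial[OF l] has_special_nonspecial[OF nonspecial(1,2)]
      nonspecial relabel_first_nonspecial[OF nonspecial(1,2)] by simp
qed (simp add: relabel_first_short)

lemma relabel_first_inverse: assumes "\<And>t. t \<in> {1..m} \<Longrightarrow> \<tau> (\<sigma> t) = t"
  shows "relabel_first m \<tau> (relabel_first m \<sigma> w) = w"
proof (induction w rule: block_induct[where m=m])
  case (special w)
  from special(2) show ?case
  proof (cases rule: special_cases)
    case (1 t)
    have l: "\<not> length (special_block m (\<sigma> t) @ drop (m+4) w) < m+4" using 1(2) by simp
    have "take (m+4) (special_block m (\<sigma> t) @ drop (m+4) w) \<in> special_blocks m"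
      using 1(2) by (auto simp: special_blocks_def)
    then have "relabel_first m \<tau> (special_block m (\<sigma> t) @ drop (m+4) w)
        = special_block m t @ drop (m+4) w"
      using l 1 assms[OF 1(1)] by (subst relabel_first.simps) simp
    then show ?thesis using 1(3,4) by (metis append_take_drop_id)
  qed
next
  case (nonspecial w)
  have l: "\<not> length (relabel_first m \<sigma> w) < m+4" using nonspecial(1) by simp
  show ?case using relabel_first_nonspecial[OF l] nonspecial relabel_first_nonspecial[OF nonspecial(1,2)]
    by simp
qed (simp add: relabel_first_short)

text \<open>The effect on the major index: only the descent of the relabelled block moves, from
  position \<open>t + 2\<close> to \<open>\<sigma> t + 2\<close> within the block.\<close>
lemma maj_relabel_first: assumes "has_special m w"
  obtains t where "t \<in> {1..m}" "maj (relabel_first m \<sigma> w) + t = maj w + \<sigma> t"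
  using assms
proof (induction w arbitrary: thesis rule: block_induct[where m=m])
  case (short w)
  then show ?case using has_special_short by blast
next
  case (special w)
  from special(2) show ?case
  proof (cases rule: special_cases)
    case (1 t)
    have "maj (relabel_first m \<sigma> w) + t = maj (special_block m t @ drop (m+4) w) + \<sigma> t"
      unfolding 1(4) maj_special_block_append[OF 1(1)] maj_special_block_append[OF 1(2)] by simp
    then show ?thesis using special(3)[OF 1(1)] 1(3) by (metis append_take_drop_id)
  qed
next
  case (nonspecial w)
  define x where "x = take (m+4) w"
  define v where "v = drop (m+4) w"
  have "has_special m v" using nonspecial(5) has_special_nonspecial[OF nonspecial(1,2)] by (simp add: v_def)
  then obtain t where t: "t \<in> {1..m}" "maj (relabel_first m \<sigma> v) + t = maj v + \<sigma> t"
    using nonspecial(3) unfolding v_def by blast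
  have ne: "x \<noteq> []" using nonspecial(1) by (cases w) (auto simp: x_def)
  have "relabel_first m \<sigma> v = [] \<longleftrightarrow> v = []"
    by (metis length_relabel_first length_0_conv)
  then have "maj (x @ relabel_first m \<sigma> v) + maj v = maj (x @ v) + maj (relabel_first m \<sigma> v)"
    unfolding maj_append[OF ne] using hd_relabel_first des_relabel_first by auto
  moreover have "w = x @ v" "relabel_first m \<sigma> w = x @ relabel_first m \<sigma> v"
    using relabel_first_nonspecial[OF nonspecial(1,2)] by (simp_all add: x_def v_def)
  ultimately have "maj (relabel_first m \<sigma> w) + maj v = maj w + maj (relabel_first m \<sigma> v)"
    by simp
  then have "maj (relabel_first m \<sigma> w) + t = maj w + \<sigma> t"
    using t(2) by linarith
  then show ?case using nonspecial(4) t(1) by blast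
qed

end

subsection \<open>Equidistribution on words with a special block\<close>

definition cyc_succ :: "nat \<Rightarrow> nat \<Rightarrow> nat" where
  "cyc_succ m t = (if t < m then t + 1 else 1)"

definition cyc_pred :: "nat \<Rightarrow> nat \<Rightarrow> nat" where
  "cyc_pred m t = (if t > 1 then t - 1 else m)"

lemma label_map_cyc_succ: "m \<ge> 1 \<Longrightarrow> label_map m (cyc_succ m)"
  by unfold_locales (auto simp: cyc_succ_def)

lemma label_map_cyc_pred: "m \<ge> 1 \<Longrightarrow> label_map m (cyc_pred m)"
  by unfold_locales (auto simp: cyc_pred_def)

lemma maj_relabel_cyc_succ: assumes "m \<ge> 1" "has_special m w"
  shows "maj (relabel_first m (cyc_succ m) w) mod m = Suc (maj w) mod m"
proof -
  interpret label_map m "cyc_succ m" using assms(1) by (rule label_map_cyc_succ)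
  obtain t where t: "t \<in> {1..m}" "maj (relabel_first m (cyc_succ m) w) + t = maj w + cyc_succ m t"
    using maj_relabel_first[OF assms(2)] by blast
  show ?thesis
  proof (cases "t < m")
    case True then show ?thesis using t(2) by (simp add: cyc_succ_def)
  next
    case False
    then have "maj (relabel_first m (cyc_succ m) w) + m = Suc (maj w)" using t by (simp add: cyc_succ_def)
    then show ?thesis by (metis mod_add_self2)
  qed
qed

definition catalan_special :: "nat \<Rightarrow> nat \<Rightarrow> nat list set" where
  "catalan_special m n = {w \<in> catalan_words n. has_special m w}"

definition catalan_special_mod :: "nat \<Rightarrow> nat \<Rightarrow> nat \<Rightarrow> nat list set" where
  "catalan_special_mod m n r = {w \<in> catalan_special m n. maj w mod m = r}"

lemma card_catalan_special_mod_Suc: assumes "m \<ge> 2" "r < m"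
  shows "card (catalan_special_mod m n r) = card (catalan_special_mod m n (Suc r mod m))"
proof -
  let ?f = "relabel_first m (cyc_succ m)" and ?g = "relabel_first m (cyc_pred m)"
  interpret succ: label_map m "cyc_succ m" using assms(1) by (intro label_map_cyc_succ) simp
  interpret pred: label_map m "cyc_pred m" using assms(1) by (intro label_map_cyc_pred) simp
  have gf: "?g (?f w) = w" and fg: "?f (?g w) = w" for w
    by (rule succ.relabel_first_inverse pred.relabel_first_inverse,
        auto simp: cyc_succ_def cyc_pred_def)+
  have f_in: "?f w \<in> catalan_special m n" and g_in: "?g w \<in> catalan_special m n"
    if "w \<in> catalan_special m n" for w
    using that succ.relabel_first_catalan[OF assms(1)] pred.relabel_first_catalan[OF assms(1)]
    unfolding catalan_special_def by (simp_all add: succ.has_special_relabel_first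
      pred.has_special_relabel_first)
  have maj_f: "maj (?f w) mod m = Suc (maj w) mod m" if "w \<in> catalan_special m n" for w
    using that assms(1) maj_relabel_cyc_succ unfolding catalan_special_def by simp
  have "bij_betw ?f (catalan_special_mod m n r) (catalan_special_mod m n (Suc r mod m))"
  proof (rule bij_betw_byWitness[where f'="?g"])
    show "?f ` catalan_special_mod m n r \<subseteq> catalan_special_mod m n (Suc r mod m)"
    proof
      fix v assume "v \<in> ?f ` catalan_special_mod m n r"
      then obtain w where w: "w \<in> catalan_special m n" "maj w mod m = r" "v = ?f w"
        unfolding catalan_special_mod_def by auto
      have "maj v mod m = Suc r mod m" using maj_f[OF w(1)] w(2,3) by (metis mod_Suc_eq)
      then show "v \<in> catalan_special_mod m n (Suc r mod m)"
        using f_in[OF w(1)] w(3) unfolding catalan_special_mod_def by simp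
    qed
    show "?g ` catalan_special_mod m n (Suc r mod m) \<subseteq> catalan_special_mod m n r"
    proof
      fix v assume "v \<in> ?g ` catalan_special_mod m n (Suc r mod m)"
      then obtain w where w: "w \<in> catalan_special_mod m n (Suc r mod m)" "v = ?g w" by auto
      then have v: "v \<in> catalan_special m n" using g_in unfolding catalan_special_mod_def by auto
      have "Suc (maj v) mod m = Suc r mod m"
        using maj_f[OF v] w fg unfolding catalan_special_mod_def by simp
      then have "maj v mod m = r" using assms(2) by (auto simp: mod_Suc split: if_splits)
      then show "v \<in> catalan_special_mod m n r" using v unfolding catalan_special_mod_def by simp
    qed
  qed (simp_all add: gf fg)
  then show ?thesis by (rule bij_betw_same_card)
qed

lemma card_catalan_special_mod: assumes "m \<ge> 2" "r < m"
  shows "m * card (catalan_special_mod m n r) = card (catalan_special m n)"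
proof -
  have same: "card (catalan_special_mod m n s) = card (catalan_special_mod m n 0)" if "s < m" for s
    using that
  proof (induction s)
    case (Suc s)
    then have "card (catalan_special_mod m n s) = card (catalan_special_mod m n (Suc s))"
      using card_catalan_special_mod_Suc[OF assms(1), of s n] by simp
    then show ?case using Suc by simp
  qed simp
  have fin: "finite (catalan_special m n)"
    using finite_catalan_words unfolding catalan_special_def by simp
  have "catalan_special m n = (\<Union>s<m. catalan_special_mod m n s)"
  proof
    show "catalan_special m n \<subseteq> (\<Union>s<m. catalan_special_mod m n s)"
      using assms(1) unfolding catalan_special_mod_def by force
  qed (auto simp: catalan_special_mod_def)
  moreover have "card (\<Union>s<m. catalan_special_mod m n s) = (\<Sum>s<m. card (catalan_special_mod m n s))"
    by (rule card_UN_disjoint) (auto simp: catalan_special_mod_def intro: finite_subset[OF _ fin])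
  ultimately have "card (catalan_special m n) = (\<Sum>s<m. card (catalan_special_mod m n s))"
    by (simp only:)
  also have "\<dots> = (\<Sum>s<m. card (catalan_special_mod m n 0))"
    by (intro sum.cong refl same) simp
  finally show ?thesis using same[OF assms(2)] by simp
qed

lemma proportion_close_to_uniform:
  fixes C D :: "'a set" and m :: nat
  assumes "finite C" "D \<subseteq> C" "C \<noteq> {}" "m \<ge> 1" "m * card {x \<in> D. P x} = card D"
  shows "\<bar>real (card {x \<in> C. P x}) / real (card C) - 1 / real m\<bar> \<le> real (card (C - D)) / real (card C)"
proof -
  define a where "a = card {x \<in> D. P x}"
  define e where "e = card (C - D)"
  define b where "b = card {x \<in> C - D. P x}"
  have fin: "finite D" "finite (C - D)" using assms(1,2) finite_subset by auto
  have card_C: "card C = m * a + e"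
    using card_Diff_subset[OF fin(1) assms(2)] card_mono[OF assms(1,2)] assms(5)
    unfolding a_def e_def by linarith
  have "card ({x \<in> D. P x} \<union> {x \<in> C - D. P x}) = a + b"
    unfolding a_def b_def by (rule card_Un_disjoint) (use fin in auto)
  moreover have "{x \<in> C. P x} = {x \<in> D. P x} \<union> {x \<in> C - D. P x}" using assms(2) by blast
  ultimately have card_P: "card {x \<in> C. P x} = a + b" by simp
  have "b \<le> e" unfolding b_def e_def using fin(2) by (intro card_mono) auto
  have pos: "real (card C) > 0" "real m > 0"
    using assms(1,3,4) by (simp_all add: card_gt_0_iff)
  have abs_bound: "\<bar>real m * real b - real e\<bar> \<le> real m * real e"
  proof -
    have "real m * real b \<le> real m * real e" using \<open>b \<le> e\<close> by (intro mult_left_mono) simp_all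
    moreover have "real e \<le> real m * real e" using assms(4) mult_right_mono[of 1 "real m" "real e"] by simp
    moreover have "0 \<le> real m * real b" by simp
    ultimately show ?thesis unfolding abs_le_iff by linarith
  qed
  have "real (card {x \<in> C. P x}) / real (card C) - 1 / real m
      = (real m * real b - real e) / (real m * real (card C))"
    using pos unfolding card_P by (simp add: card_C field_simps)
  then have "\<bar>real (card {x \<in> C. P x}) / real (card C) - 1 / real m\<bar>
      = \<bar>real m * real b - real e\<bar> / (real m * real (card C))"
    using pos by (simp add: abs_div)
  also have "\<dots> \<le> real m * real e / (real m * real (card C))"
    using abs_bound pos by (intro divide_right_mono) simp_all
  also have "\<dots> = real (card (C - D)) / real (card C)" using pos by (simp add: e_def)
  finally show ?thesis .
qed

subsection \<open>Counting words without a special block\<close>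

definition binary_words :: "nat \<Rightarrow> nat list set" where
  "binary_words N = {x. set x \<subseteq> {0,1} \<and> length x = N}"

lemma finite_binary_words: "finite (binary_words N)"
  unfolding binary_words_def by (rule finite_lists_length_eq) simp

lemma card_binary_words: "card (binary_words N) = 2 ^ N"
proof -
  have "card {0::nat, 1} = 2" by simp
  then show ?thesis using card_lists_length_eq[of "{0::nat,1}" N] unfolding binary_words_def
    by (simp add: numeral_2_eq_2)
qed

definition special_free :: "nat \<Rightarrow> nat \<Rightarrow> nat list set" where
  "special_free m N = {w \<in> binary_words N. \<not> has_special m w}"

lemma special_free_split: assumes "\<not> N < m+4"
  shows "special_free m N \<subseteq> (\<lambda>(x,y). x @ y) `
    ((binary_words (m+4) - special_blocks m) \<times> special_free m (N - (m+4)))"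
proof
  fix w assume w: "w \<in> special_free m N"
  have l: "\<not> length w < m + 4" using w assms unfolding special_free_def binary_words_def by simp
  have nb: "take (m+4) w \<notin> special_blocks m"
    using w has_special_special[OF l] unfolding special_free_def by auto
  have "\<not> has_special m (drop (m+4) w)"
    using w has_special_nonspecial[OF l nb] unfolding special_free_def by auto
  moreover have "set (take (m+4) w) \<subseteq> {0,1}" "set (drop (m+4) w) \<subseteq> {0,1}"
    using w unfolding special_free_def binary_words_def by (auto dest: in_set_takeD in_set_dropD)
  ultimately have "(take (m+4) w, drop (m+4) w)
      \<in> (binary_words (m+4) - special_blocks m) \<times> special_free m (N - (m+4))"
    using w nb l unfolding special_free_def binary_words_def by simp
  then show "w \<in> (\<lambda>(x,y). x @ y) ` ((binary_words (m+4) - special_blocks m) \<times> special_free m (N - (m+4)))"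
    by (metis (no_types, lifting) append_take_drop_id case_prod_conv image_eqI)
qed

text \<open>Each full block has at most \<open>2^(m+4) - 1\<close> choices, since at least one special block
  exists.\<close>
lemma card_special_free: assumes "m \<ge> 1"
  shows "card (special_free m N) \<le> (2^(m+4) - 1)^(N div (m+4)) * 2^(N mod (m+4))"
proof (induction N rule: less_induct)
  case (less N)
  show ?case
  proof (cases "N < m+4")
    case True
    have "card (special_free m N) \<le> card (binary_words N)"
      unfolding special_free_def by (intro card_mono finite_binary_words) auto
    then show ?thesis using True card_binary_words by simp
  next
    case False
    let ?X = "binary_words (m+4) - special_blocks m"
    have "special_block m 1 \<in> binary_words (m+4) \<inter> special_blocks m"
      using assms set_special_block[of m 1] unfolding binary_words_def special_blocks_def by auto
    then have "?X \<subseteq> binary_words (m+4) - {special_block m 1}" by blast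
    then have "card ?X \<le> card (binary_words (m+4) - {special_block m 1})"
      by (intro card_mono) (simp_all add: finite_binary_words)
    also have "\<dots> = 2^(m+4) - 1"
      using \<open>special_block m 1 \<in> _\<close> by (simp add: card_binary_words)
    finally have card_X: "card ?X \<le> 2^(m+4) - 1" .
    have fP: "finite (?X \<times> special_free m (N - (m+4)))"
      using finite_binary_words unfolding special_free_def by simp
    have "card (special_free m N) \<le> card ((\<lambda>(x,y). x @ y) ` (?X \<times> special_free m (N - (m+4))))"
      by (rule card_mono[OF finite_imageI[OF fP] special_free_split[OF False]])
    also have "\<dots> \<le> card ?X * card (special_free m (N - (m+4)))"
      using card_image_le[OF fP] by (simp add: card_cartesian_product)
    also have "\<dots> \<le> (2^(m+4) - 1) * ((2^(m+4) - 1)^((N - (m+4)) div (m+4)) * 2^((N - (m+4)) mod (m+4)))"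
      using less[of "N - (m+4)"] False card_X by (intro mult_mono) auto
    also have "\<dots> = (2^(m+4) - 1)^(N div (m+4)) * 2^(N mod (m+4))"
    proof -
      have "N div (m+4) = Suc ((N - (m+4)) div (m+4))" "N mod (m+4) = (N - (m+4)) mod (m+4)"
        using False by (simp_all add: le_div_geq le_mod_geq)
      then show ?thesis by simp
    qed
    finally show ?thesis .
  qed
qed

lemma card_catalan_nonspecial: assumes "m \<ge> 1"
  shows "card (catalan_words n - catalan_special m n) \<le> 2^(m+4) * (2^(m+4) - 1)^((2*n) div (m+4))"
proof -
  have "catalan_words n - catalan_special m n \<subseteq> special_free m (2*n)"
    unfolding catalan_words_def catalan_special_def special_free_def binary_words_def by auto
  then have "card (catalan_words n - catalan_special m n) \<le> card (special_free m (2*n))"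
    by (intro card_mono) (simp_all add: special_free_def finite_binary_words)
  also have "\<dots> \<le> (2^(m+4) - 1)^((2*n) div (m+4)) * 2^((2*n) mod (m+4))"
    using assms by (rule card_special_free)
  also have "\<dots> \<le> (2^(m+4) - 1)^((2*n) div (m+4)) * 2^(m+4)"
    by (intro mult_left_mono power_increasing) simp_all
  finally show ?thesis by (simp add: mult.commute)
qed

subsection \<open>A lower bound for the number of Catalan words\<close>

definition balanced_words :: "nat \<Rightarrow> nat list set" where
  "balanced_words n = {w. length w = 2*n \<and> set w \<subseteq> {0,1} \<and> count_list w 0 = n \<and> count_list w 1 = n}"

lemma balanced_words_permutations:
  "balanced_words n = permutations_of_multiset (replicate_mset n 0 + replicate_mset n 1)"
proof (rule set_eqI)
  fix w :: "nat list"
  let ?M = "replicate_mset n 0 + replicate_mset n (1::nat)"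
  show "w \<in> balanced_words n \<longleftrightarrow> w \<in> permutations_of_multiset ?M"
  proof
    assume w: "w \<in> balanced_words n"
    have "mset w = ?M"
    proof (rule multiset_eqI)
      fix x
      show "count (mset w) x = count ?M x"
      proof (cases "x = 0 \<or> x = 1")
        case True then show ?thesis using w unfolding balanced_words_def count_mset by auto
      next
        case False
        then have "x \<notin> set w" using w unfolding balanced_words_def by auto
        then show ?thesis using False unfolding count_mset by simp
      qed
    qed
    then show "w \<in> permutations_of_multiset ?M" by (rule permutations_of_multisetI)
  next
    assume "w \<in> permutations_of_multiset ?M"
    then have m: "mset w = ?M" by (rule permutations_of_multisetD)
    have "length w = 2*n" using arg_cong[OF m, of size] by simp
    moreover have "set w \<subseteq> {0,1}" using arg_cong[OF m, of set_mset] by (auto split: if_splits)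
    moreover have "count_list w 0 = n" "count_list w 1 = n"
      using arg_cong[OF m, of "\<lambda>M. count M 0"] arg_cong[OF m, of "\<lambda>M. count M 1"]
      unfolding count_mset by simp_all
    ultimately show "w \<in> balanced_words n" unfolding balanced_words_def by simp
  qed
qed

lemma card_balanced_words: "card (balanced_words n) = (2*n) choose n"
proof (cases "n = 0")
  case True
  then have "balanced_words n = {[]}" unfolding balanced_words_def by auto
  then show ?thesis using True by simp
next
  case False
  let ?M = "replicate_mset n 0 + replicate_mset n (1::nat)"
  have "set_mset ?M = {0,1}" using False by auto
  then have "card (balanced_words n) = fact (2*n) div (fact n * fact n)"
    unfolding balanced_words_permutations card_permutations_of_multiset(1) by (simp add: mult_2)
  then show ?thesis using binomial_fact'[of n "2*n"] by simp
qed

lemma count_list_rotate: "count_list (rotate k xs) a = count_list xs a"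
proof -
  have "count_list (drop j xs) a + count_list (take j xs) a = count_list xs a" for j
    using count_list_append[of "take j xs" "drop j xs" a] by simp
  then show ?thesis by (simp add: rotate_drop_take)
qed

text \<open>Cycle lemma (existence part): rotating a balanced word to start right after a prefix of
  minimal height yields a Catalan word.\<close>
lemma rotate_to_catalan: assumes "u \<in> balanced_words n" "n \<ge> 1"
  obtains k where "k < 2*n" "rotate k u \<in> catalan_words n"
proof -
  define ht where "ht k = int (count_list (take k u) 0) - int (count_list (take k u) 1)" for k
  have lu: "length u = 2*n" using assms(1) unfolding balanced_words_def by simp
  have "0 \<in> {..<2*n}" using assms(2) by simp
  then have fin: "finite (ht ` {..<2*n})" "ht ` {..<2*n} \<noteq> {}" by blast+
  obtain k where k: "k < 2*n" "ht k = Min (ht ` {..<2*n})" using Min_in[OF fin] by auto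
  have min: "ht k \<le> ht j" if "j \<le> 2*n" for j
  proof (cases "j < 2*n")
    case True then show ?thesis using k Min_le[OF fin(1)] by simp
  next
    case False
    then have "ht j = ht 0" using that assms(1) lu unfolding ht_def balanced_words_def by simp
    then show ?thesis using k Min_le[OF fin(1), of "ht 0"] assms(2) by simp
  qed
  have ht_total: "int (count_list (drop k u) 0) - int (count_list (drop k u) 1) = - ht k"
    using assms(1) count_list_append[of "take k u" "drop k u"] unfolding ht_def balanced_words_def
    by simp
  have "nonneg_path 0 (drop k u)"
    unfolding nonneg_path_def
  proof (intro allI impI)
    fix j assume j: "j \<le> length (drop k u)"
    have "ht (k+j) = ht k + (int (count_list (take j (drop k u)) 0) - int (count_list (take j (drop k u)) 1))"
      unfolding ht_def by (simp add: take_add)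
    moreover have "ht k \<le> ht (k+j)" using min j lu k(1) by simp
    ultimately show "int (count_list (take j (drop k u)) 1) \<le> int (count_list (take j (drop k u)) 0) + 0"
      by linarith
  qed
  moreover have "nonneg_path (- ht k) (take k u)"
    unfolding nonneg_path_def
  proof (intro allI impI)
    fix j assume "j \<le> length (take k u)"
    then have "j \<le> k" "ht k \<le> ht j" using min[of j] k(1) by simp_all
    then show "int (count_list (take j (take k u)) 1) \<le> int (count_list (take j (take k u)) 0) + - ht k"
      unfolding ht_def by simp
  qed
  ultimately have "nonneg_path 0 (rotate k u)"
    using k lu ht_total by (simp add: rotate_drop_take nonneg_path_append)
  then have "rotate k u \<in> catalan_words n"
    using assms(1) count_list_rotate[of k u]
    unfolding catalan_words_nonneg_path balanced_words_def by simp
  then show ?thesis using k that by blast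
qed

text \<open>Every balanced word is a rotation of a Catalan word, hence \<open>binom(2n,n) \<le> (2n+1) C_n\<close>.\<close>
lemma card_balanced_le_catalan: assumes "n \<ge> 1"
  shows "card (balanced_words n) \<le> (2*n+1) * card (catalan_words n)"
proof -
  let ?R = "\<Union>w\<in>catalan_words n. (\<lambda>j. rotate j w) ` {..2*n}"
  have "balanced_words n \<subseteq> ?R"
  proof
    fix u assume u: "u \<in> balanced_words n"
    obtain k where k: "k < 2*n" "rotate k u \<in> catalan_words n"
      using rotate_to_catalan[OF u assms] by blast
    have "rotate (2*n - k) (rotate k u) = rotate (2*n - k + k) u" by (rule rotate_rotate)
    also have "\<dots> = u" using k u unfolding balanced_words_def by simp
    finally have "u \<in> (\<lambda>j. rotate j (rotate k u)) ` {..2*n}"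
      using image_eqI[of u "\<lambda>j. rotate j (rotate k u)" "2*n - k" "{..2*n}"] by simp
    then show "u \<in> ?R" using k(2) by blast
  qed
  then have "card (balanced_words n) \<le> card ?R"
    by (intro card_mono) (simp_all add: finite_catalan_words)
  also have "\<dots> \<le> (\<Sum>w\<in>catalan_words n. card ((\<lambda>j. rotate j w) ` {..2*n}))"
    by (rule card_UN_le[OF finite_catalan_words])
  also have "\<dots> \<le> (\<Sum>w\<in>catalan_words n. 2*n+1)"
    by (intro sum_mono) (metis card_atMost card_image_le finite_atMost Suc_eq_plus1)
  finally show ?thesis by (simp add: algebra_simps)
qed

lemma catalan_lower_bound: assumes "n \<ge> 1"
  shows "4^n \<le> 2 * real n * (2 * real n + 1) * real (card (catalan_words n))"
proof -
  have "4^n / (2 * real n) \<le> real ((2*n) choose n)"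
    using assms by (intro central_binomial_lower_bound) simp
  also have "\<dots> \<le> real ((2*n+1) * card (catalan_words n))"
  proof -
    have "(2*n) choose n \<le> (2*n+1) * card (catalan_words n)"
      using card_balanced_le_catalan[OF assms] card_balanced_words[of n] by simp
    then show ?thesis by (simp only: of_nat_le_iff)
  qed
  finally show ?thesis using assms by (simp add: divide_le_eq algebra_simps)
qed

subsection \<open>The exceptional words are negligible\<close>

lemma poly_geometric_tendsto_0:
  fixes \<rho> :: real assumes "0 \<le> \<rho>" "\<rho> < 1"
  shows "(\<lambda>q. (real q + 1)^2 * \<rho>^q) \<longlonglongrightarrow> 0"
proof -
  define \<sigma> where "\<sigma> = sqrt \<rho>"
  have \<sigma>: "0 \<le> \<sigma>" "\<sigma> < 1" "\<sigma>^2 = \<rho>" using assms unfolding \<sigma>_def by simp_all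
  have "(\<lambda>q. real q * \<sigma>^q + \<sigma>^q) \<longlonglongrightarrow> 0 + 0"
    using \<sigma> by (intro tendsto_add powser_times_n_limit_0 LIMSEQ_power_zero) simp_all
  then have "(\<lambda>q. ((real q + 1) * \<sigma>^q)^2) \<longlonglongrightarrow> 0^2"
    by (intro tendsto_power) (simp add: algebra_simps)
  moreover have "((real q + 1) * \<sigma>^q)^2 = (real q + 1)^2 * \<rho>^q" for q
  proof -
    have "(\<sigma>^q)^2 = (\<sigma>^2)^q" by (simp only: power_mult[symmetric] mult.commute)
    then show ?thesis using \<sigma>(3) by (simp add: power_mult_distrib)
  qed
  ultimately show ?thesis by simp
qed

lemma exceptional_fraction_bound: assumes "m \<ge> 1" "n \<ge> 1"
  defines "K \<equiv> m + 4" and "q \<equiv> (2*n) div (m + 4)"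
  shows "real (card (catalan_words n - catalan_special m n)) / real (card (catalan_words n))
    \<le> 2^K * real K^2 * ((real q + 1)^2 * ((2^K - 1) / 2^K)^q)"
proof -
  define E where "E = real (card (catalan_words n - catalan_special m n))"
  define C where "C = real (card (catalan_words n))"
  define P where "P = 2 * real n * (2 * real n + 1)"
  have "E \<le> real (2^K * (2^K - 1)^q)"
    unfolding E_def K_def q_def using card_catalan_nonspecial[OF assms(1)] of_nat_le_iff by blast
  then have E: "E \<le> 2^K * (2^K - 1)^q" by (simp add: of_nat_diff)
  have P: "0 < P" using assms(2) unfolding P_def by simp
  have C: "4^n \<le> P * C" using catalan_lower_bound[OF assms(2)] unfolding P_def C_def .
  then have "0 < P * C" by (smt (verit) zero_less_power)
  then have "0 < C" using P by (simp add: zero_less_mult_iff)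
  have P_le: "P \<le> real K^2 * (real q + 1)^2"
  proof -
    have "2*n = K*q + (2*n) mod K" "(2*n) mod K < K" unfolding q_def K_def by simp_all
    then have "2*n < K * (q+1)" unfolding distrib_left mult_1_right by linarith
    then have "2*n \<le> K*(q+1)" "2*n+1 \<le> K*(q+1)" by linarith+
    then have "(2*n) * (2*n+1) \<le> (K*(q+1)) * (K*(q+1))" by (rule mult_le_mono)
    then have "real ((2*n) * (2*n+1)) \<le> real ((K*(q+1)) * (K*(q+1)))" by (simp only: of_nat_le_iff)
    then show ?thesis unfolding P_def by (simp add: power2_eq_square algebra_simps)
  qed
  have pow_le: "((2::real)^K)^q \<le> 4^n"
  proof -
    have "K * q \<le> 2*n" unfolding q_def K_def by (simp add: mult.commute)
    then have "(2::real)^(K*q) \<le> 2^(2*n)" by (intro power_increasing) simp_all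
    then show ?thesis by (simp add: power_mult)
  qed
  have "E / C = E * P / (P * C)" using P by simp
  also have "\<dots> \<le> E * P / 4^n"
    using C P \<open>0 < P * C\<close> unfolding E_def by (intro divide_left_mono) simp_all
  also have "\<dots> \<le> (2^K * (2^K - 1)^q) * (real K^2 * (real q + 1)^2) / (2^K)^q"
    using E P P_le pow_le unfolding E_def by (intro frac_le mult_mono) (simp_all add: K_def)
  also have "\<dots> = 2^K * real K^2 * ((real q + 1)^2 * ((2^K - 1) / 2^K)^q)"
    by (simp add: power_divide)
  finally show ?thesis unfolding E_def C_def .
qed

lemma exceptional_fraction_tendsto_0: assumes "m \<ge> 1"
  shows "(\<lambda>n. real (card (catalan_words n - catalan_special m n)) / real (card (catalan_words n)))
    \<longlonglongrightarrow> 0"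
proof -
  define K where "K = m + 4"
  define g where "g q = (real q + 1)^2 * ((2^K - 1) / 2^K)^q" for q
  have "g \<longlonglongrightarrow> 0" unfolding g_def by (intro poly_geometric_tendsto_0) (simp_all add: K_def)
  moreover have "filterlim (\<lambda>n. (2*n) div K) sequentially sequentially"
    by (intro filterlim_compose[OF filterlim_at_top_div_const_nat filterlim_subseq])
       (simp_all add: K_def strict_mono_def)
  ultimately have "(\<lambda>n. g ((2*n) div K)) \<longlonglongrightarrow> 0" by (rule filterlim_compose)
  then show ?thesis
  proof (rule tendsto_0_le)
    show "\<forall>\<^sub>F n in sequentially. norm (real (card (catalan_words n - catalan_special m n))
        / real (card (catalan_words n))) \<le> norm (g ((2*n) div K)) * (2^K * real K^2)"
      using eventually_ge_at_top[of 1]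
    proof eventually_elim
      case (elim n)
      have "0 \<le> g ((2*n) div K)" by (simp add: g_def K_def)
      then show ?case using exceptional_fraction_bound[OF assms elim] unfolding g_def K_def
        by (simp add: algebra_simps)
    qed
  qed
qed

theorem theorem3:
  fixes m r :: nat
  assumes "m \<ge> 2" and "r \<le> m - 1"
  shows "(\<lambda>n. real (card {w \<in> catalan_words n. maj w mod m = r})
               / real (card (catalan_words n))) \<longlonglongrightarrow> 1 / real m"
proof -
  have m: "m \<ge> 2" "r < m" using assms by auto
  have "\<bar>real (card {w \<in> catalan_words n. maj w mod m = r}) / real (card (catalan_words n)) - 1 / real m\<bar>
      \<le> real (card (catalan_words n - catalan_special m n)) / real (card (catalan_words n))" for n
    using card_catalan_special_mod[OF m, of n] m(1)
    by (intro proportion_close_to_uniform finite_catalan_words catalan_words_nonempty)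
       (auto simp: catalan_special_def catalan_special_mod_def)
  then have "(\<lambda>n. real (card {w \<in> catalan_words n. maj w mod m = r}) / real (card (catalan_words n))
      - 1 / real m) \<longlonglongrightarrow> 0"
    using m(1) by (intro tendsto_0_le[OF exceptional_fraction_tendsto_0[of m], where K=1]) auto
  then show ?thesis by (rule LIM_zero_cancel)
qed

end
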